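(* Let $M$ be a bi-variate homogeneous symmetric mean having a symmetric asymptotic expansion with coefficients $(a_n)_{n\ge0}$. Then for fixed real $s,t$ with $s\ne\pm t$, $M(x+s,x+t)\sim\sum_{m\ge0}a_m(s,t)x^{-m+1}$ as $x\to\infty$, where $$a_m(s,t)=2^{-m}\sum_{n=0}^{\lfloor m/2\rfloor}a_n\binom{1-2n}{m-2n}(t-s)^{2n}(t+s)^{m-2n},\qquad m\in\mathbb N_0.$$
   Context: A bi-variate mean is $M:(0,\infty)^2\to(0,\infty)$ with $\min(s,t)\le M(s,t)\le\max(s,t)$; symmetric: $M(s,t)=M(t,s)$; homogeneous: $M(\lambda s,\lambda t)=\lambda M(s,t)$. $M$ has a symmetric asymptotic expansion with coefficients $(a_n)$ if for every fixed real $t$ and every $N\ge0$, $M(x-t,x+t)=\sum_{n=0}^Na_nt^{2n}x^{-2n+1}+o(x^{-2N+1})$ as $x\to\infty$. The binomial coefficient $\binom{r}{k}=r(r-1)\cdots(r-k+1)/k!$ for real $r$. The notation $F(x)\sim\sum_m c_mx^{-m+1}$ means $F(x)=\sum_{m=0}^Nc_mx^{-m+1}+o(x^{-N+1})$ for every $N$. *)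

theory Defs
  imports Complex_Main "HOL-Library.Landau_Symbols"
begin

text \<open>A bi-variate mean on (0,inf)^2; M is a total function on real pairs but only
  its values on positive arguments are constrained.\<close>
definition is_mean :: "(real \<Rightarrow> real \<Rightarrow> real) \<Rightarrow> bool" where
  "is_mean M \<longleftrightarrow> (\<forall>s>0. \<forall>t>0. M s t > 0 \<and> min s t \<le> M s t \<and> M s t \<le> max s t)"

definition symmetric_mean :: "(real \<Rightarrow> real \<Rightarrow> real) \<Rightarrow> bool" where
  "symmetric_mean M \<longleftrightarrow> (\<forall>s>0. \<forall>t>0. M s t = M t s)"

definition homogeneous_mean :: "(real \<Rightarrow> real \<Rightarrow> real) \<Rightarrow> bool" where
  "homogeneous_mean M \<longleftrightarrow> (\<forall>l>0. \<forall>s>0. \<forall>t>0. M (l * s) (l * t) = l * M s t)"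

definition has_sym_asym_expansion :: "(real \<Rightarrow> real \<Rightarrow> real) \<Rightarrow> (nat \<Rightarrow> real) \<Rightarrow> bool" where
  "has_sym_asym_expansion M a \<longleftrightarrow>
     (\<forall>t::real. \<forall>N::nat.
        (\<lambda>x. M (x - t) (x + t) - (\<Sum>n\<le>N. a n * t ^ (2*n) * x powr (1 - 2 * real n)))
          \<in> o[at_top](\<lambda>x. x powr (1 - 2 * real N)))"

definition asym_coeff :: "(nat \<Rightarrow> real) \<Rightarrow> real \<Rightarrow> real \<Rightarrow> nat \<Rightarrow> real" where
  "asym_coeff a s t m = (1 / 2 ^ m) *
     (\<Sum>n\<le>m div 2. a n * ((1 - 2 * real n) gchoose (m - 2 * n))
        * (t - s) ^ (2 * n) * (t + s) ^ (m - 2 * n))"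

end

theory Submission
  imports Defs "HOL-Analysis.Generalised_Binomial_Theorem" "HOL-Real_Asymp.Real_Asymp"
begin

text \<open>Put \<open>c = (s + t) / 2\<close> and \<open>u = (t - s) / 2\<close>, so that \<open>M (x + s) (x + t) = M (y - u) (y + u)\<close>
  with \<open>y = x + c\<close>. The symmetric expansion at \<open>y\<close> gives
  \<open>M (x + s) (x + t) \<approx> \<Sum>n. a n * u ^ (2 * n) * (x + c) powr (1 - 2 * n)\<close>. Expanding each
  \<open>(x + c) powr (1 - 2 * n) = x powr (1 - 2 * n) * (1 + c / x) powr (1 - 2 * n)\<close> by the binomial
  series and collecting the terms \<open>x powr (1 - 2 * n - k)\<close> with \<open>2 * n + k = m\<close> yields the
  coefficient of \<open>x powr (1 - m)\<close>.\<close>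

lemma powr_smallo_powr_at_top: "p < q \<Longrightarrow> (\<lambda>x::real. x powr p) \<in> o[at_top](\<lambda>x. x powr q)"
  using powr_smallo_iff[of "\<lambda>x. x" at_top p q] by (simp add: filterlim_ident)

lemma powr_bigo_powr_at_top: "p \<le> q \<Longrightarrow> (\<lambda>x::real. x powr p) \<in> O[at_top](\<lambda>x. x powr q)"
  using powr_bigo_iff[of "\<lambda>x. x" at_top p q] by (simp add: filterlim_ident)

lemma cmult_in_smallo: "f \<in> o[F](g) \<Longrightarrow> (\<lambda>x. C * f x) \<in> o[F](g)"
  by (cases "C = 0") simp_all

definition gbinomial_series_tail :: "real \<Rightarrow> nat \<Rightarrow> real \<Rightarrow> real" where
  "gbinomial_series_tail r K z = (\<Sum>j. (r gchoose (j + Suc K)) * z ^ j)"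

lemma gbinomial_series_tail_sums:
  fixes r z :: real
  assumes "\<bar>z\<bar> < 1"
  shows "(\<lambda>j. (r gchoose (j + Suc K)) * z ^ j) sums gbinomial_series_tail r K z"
    and "(1 + z) powr r - (\<Sum>k\<le>K. (r gchoose k) * z ^ k) = z ^ Suc K * gbinomial_series_tail r K z"
proof -
  have "(\<lambda>j. (r gchoose (j + Suc K)) * z ^ (j + Suc K))
          sums ((1 + z) powr r - (\<Sum>k<Suc K. (r gchoose k) * z ^ k))"
    using gen_binomial_real[of z r] assms sums_iff_shift[of "\<lambda>k. (r gchoose k) * z ^ k" "Suc K"]
    by simp
  then have tail: "(\<lambda>j. z ^ Suc K * ((r gchoose (j + Suc K)) * z ^ j))
          sums ((1 + z) powr r - (\<Sum>k\<le>K. (r gchoose k) * z ^ k))"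
    by (simp add: lessThan_Suc_atMost power_add mult_ac)
  have summable: "summable (\<lambda>j. (r gchoose (j + Suc K)) * z ^ j)"
  proof (cases "z = 0")
    case False
    then show ?thesis using sums_summable[OF tail] by simp
  qed simp
  then show "(\<lambda>j. (r gchoose (j + Suc K)) * z ^ j) sums gbinomial_series_tail r K z"
    unfolding gbinomial_series_tail_def by (rule summable_sums)
  then have "(\<lambda>j. z ^ Suc K * ((r gchoose (j + Suc K)) * z ^ j))
               sums (z ^ Suc K * gbinomial_series_tail r K z)"
    by (rule sums_mult)
  with tail show "(1 + z) powr r - (\<Sum>k\<le>K. (r gchoose k) * z ^ k)
                    = z ^ Suc K * gbinomial_series_tail r K z"
    using sums_unique2 by blast
qed

lemma isCont_gbinomial_series_tail: "isCont (gbinomial_series_tail r K) 0"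
proof -
  have "summable (\<lambda>j. (r gchoose (j + Suc K)) * (1/2 :: real) ^ j)"
    using gbinomial_series_tail_sums(1)[of "1/2"] sums_summable by force
  then have "isCont (\<lambda>z. \<Sum>j. (r gchoose (j + Suc K)) * z ^ j) 0"
    by (rule isCont_powser) simp
  then show ?thesis unfolding gbinomial_series_tail_def[abs_def] .
qed

lemma gbinomial_series_tail_bounded_at_top:
  "\<exists>B. eventually (\<lambda>x. \<bar>gbinomial_series_tail r K (c / x)\<bar> \<le> B) at_top"
proof -
  have "((\<lambda>x::real. c / x) \<longlongrightarrow> 0) at_top" by real_asymp
  then have "((\<lambda>x. gbinomial_series_tail r K (c / x)) \<longlongrightarrow> gbinomial_series_tail r K 0) at_top"
    by (rule isCont_tendsto_compose[OF isCont_gbinomial_series_tail])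
  then have "eventually (\<lambda>x. dist (gbinomial_series_tail r K (c / x)) (gbinomial_series_tail r K 0) < 1) at_top"
    by (rule tendstoD) simp
  then have "eventually (\<lambda>x. \<bar>gbinomial_series_tail r K (c / x)\<bar> \<le> \<bar>gbinomial_series_tail r K 0\<bar> + 1) at_top"
    by eventually_elim (auto simp: dist_real_def)
  then show ?thesis by blast
qed

lemma powr_shift_eq_binomial_remainder:
  fixes x c r :: real
  assumes "x > \<bar>c\<bar>"
  shows "(x + c) powr r - (\<Sum>k\<le>K. (r gchoose k) * c ^ k * x powr (r - real k))
           = c ^ Suc K * gbinomial_series_tail r K (c / x) * x powr (r - real K - 1)"
proof -
  have x: "x > 0" using assms by linarith
  have z: "\<bar>c / x\<bar> < 1" using assms x by (simp add: abs_div divide_less_eq)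
  have "x * (1 + c / x) = x + c" using x by (simp add: field_simps)
  moreover have "1 + c / x \<ge> 0" using z abs_less_iff[of "c / x" 1] by linarith
  ultimately have shift: "(x + c) powr r = x powr r * (1 + c / x) powr r"
    using powr_mult[of x "1 + c / x" r] x by simp
  have "x powr (r - real k) = x powr r * (1 / x) ^ k" for k
    using x by (simp add: powr_diff powr_realpow power_one_over divide_inverse power_inverse)
  then have partial: "(\<Sum>k\<le>K. (r gchoose k) * c ^ k * x powr (r - real k))
                        = x powr r * (\<Sum>k\<le>K. (r gchoose k) * (c / x) ^ k)"
    by (simp add: sum_distrib_left power_divide mult_ac)
  have scale: "x powr (r - real K - 1) = x powr r / x ^ Suc K"
    using x by (simp add: powr_diff powr_realpow[symmetric] powr_add algebra_simps)
  have "(x + c) powr r - (\<Sum>k\<le>K. (r gchoose k) * c ^ k * x powr (r - real k))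
          = x powr r * ((1 + c / x) powr r - (\<Sum>k\<le>K. (r gchoose k) * (c / x) ^ k))"
    by (simp only: shift partial right_diff_distrib)
  also have "\<dots> = x powr r * ((c / x) ^ Suc K * gbinomial_series_tail r K (c / x))"
    by (simp only: gbinomial_series_tail_sums(2)[OF z])
  also have "\<dots> = c ^ Suc K * gbinomial_series_tail r K (c / x) * (x powr r / x ^ Suc K)"
    by (simp only: power_divide) (simp add: field_simps)
  finally show ?thesis by (simp only: scale)
qed

lemma powr_shift_expansion_at_top:
  fixes r c :: real
  shows "(\<lambda>x. (x + c) powr r - (\<Sum>k\<le>K. (r gchoose k) * c ^ k * x powr (r - real k)))
           \<in> O[at_top](\<lambda>x. x powr (r - real K - 1))"
proof -
  obtain B where B: "eventually (\<lambda>x. \<bar>gbinomial_series_tail r K (c / x)\<bar> \<le> B) at_top"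
    using gbinomial_series_tail_bounded_at_top by blast
  have bigo: "(\<lambda>x. c ^ Suc K * gbinomial_series_tail r K (c / x) * x powr (r - real K - 1))
          \<in> O[at_top](\<lambda>x. x powr (r - real K - 1))"
  proof (rule bigoI)
    show "eventually (\<lambda>x. norm (c ^ Suc K * gbinomial_series_tail r K (c / x) * x powr (r - real K - 1))
            \<le> \<bar>c ^ Suc K\<bar> * B * norm (x powr (r - real K - 1))) at_top"
      using B by eventually_elim (simp add: abs_mult mult_left_mono mult_right_mono)
  qed
  have "eventually (\<lambda>x. x > \<bar>c\<bar>) at_top" by real_asymp
  then have eq: "eventually (\<lambda>x. (x + c) powr r - (\<Sum>k\<le>K. (r gchoose k) * c ^ k * x powr (r - real k))
           = c ^ Suc K * gbinomial_series_tail r K (c / x) * x powr (r - real K - 1)) at_top"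
    by eventually_elim (rule powr_shift_eq_binomial_remainder)
  from bigo show ?thesis unfolding landau_o.big.in_cong[OF eq] .
qed

lemma powr_shift_bigo_at_top: "(\<lambda>x::real. (x + c) powr p) \<in> O[at_top](\<lambda>x. x powr p)"
proof -
  have "(\<lambda>x. (x + c) powr p - x powr p) \<in> O[at_top](\<lambda>x. x powr (p - 1))"
    using powr_shift_expansion_at_top[of c p 0] by simp
  also have "(\<lambda>x. x powr (p - 1)) \<in> O[at_top](\<lambda>x. x powr p)"
    by (rule powr_bigo_powr_at_top) simp
  finally have "(\<lambda>x. (x + c) powr p - x powr p) \<in> O[at_top](\<lambda>x. x powr p)" .
  from sum_in_bigo(1)[OF this, of "\<lambda>x. x powr p"] show ?thesis by simp
qed

lemma sum_atMost_div2_reindex: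
  fixes h :: "nat \<Rightarrow> nat \<Rightarrow> 'a :: comm_monoid_add"
  shows "(\<Sum>m\<le>N. \<Sum>n\<le>m div 2. h n (m - 2 * n)) = (\<Sum>(n, k)\<in>{(n, k). 2 * n + k \<le> N}. h n k)"
proof -
  have "(\<Sum>m\<le>N. \<Sum>n\<le>m div 2. h n (m - 2 * n)) = (\<Sum>(m, n)\<in>Sigma {..N} (\<lambda>m. {..m div 2}). h n (m - 2 * n))"
    by (rule sum.Sigma) auto
  also have "\<dots> = (\<Sum>(n, k)\<in>{(n, k). 2 * n + k \<le> N}. h n k)"
    by (rule sum.reindex_bij_witness[where i = "\<lambda>(n, k). (2 * n + k, n)" and j = "\<lambda>(m, n). (n, m - 2 * n)"])
       auto
  finally show ?thesis .
qed

definition shift_coeff :: "(nat \<Rightarrow> real) \<Rightarrow> real \<Rightarrow> nat \<Rightarrow> real" where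
  "shift_coeff b c m = (\<Sum>n\<le>m div 2. b n * ((1 - 2 * real n) gchoose (m - 2 * n)) * c ^ (m - 2 * n))"

lemma sum_powr_shift_expansion_at_top:
  "(\<lambda>x. (\<Sum>n\<le>N. b n * (x + c) powr (1 - 2 * real n))
         - (\<Sum>n\<le>N. \<Sum>k\<le>N. b n * ((1 - 2 * real n) gchoose k) * c ^ k * x powr (1 - 2 * real n - real k)))
     \<in> o[at_top](\<lambda>x. x powr (1 - real N))"
proof -
  have "(\<lambda>x. \<Sum>n\<le>N. b n * ((x + c) powr (1 - 2 * real n)
            - (\<Sum>k\<le>N. ((1 - 2 * real n) gchoose k) * c ^ k * x powr (1 - 2 * real n - real k))))
          \<in> o[at_top](\<lambda>x. x powr (1 - real N))"
  proof (intro big_sum_in_smallo cmult_in_smallo)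
    fix n
    show "(\<lambda>x. (x + c) powr (1 - 2 * real n)
            - (\<Sum>k\<le>N. ((1 - 2 * real n) gchoose k) * c ^ k * x powr (1 - 2 * real n - real k)))
            \<in> o[at_top](\<lambda>x. x powr (1 - real N))"
      by (rule landau_o.big_small_trans[OF powr_shift_expansion_at_top powr_smallo_powr_at_top])
         simp
  qed
  then show ?thesis
    by (simp add: right_diff_distrib sum_subtractf sum_distrib_left mult.assoc)
qed

lemma double_sum_truncation_at_top:
  "(\<lambda>x. (\<Sum>n\<le>N. \<Sum>k\<le>N. b n * ((1 - 2 * real n) gchoose k) * c ^ k * x powr (1 - 2 * real n - real k))
         - (\<Sum>m\<le>N. shift_coeff b c m * x powr (1 - real m)))
     \<in> o[at_top](\<lambda>x. x powr (1 - real N))"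
proof -
  define trm where "trm = (\<lambda>(n, k) x. b n * ((1 - 2 * real n) gchoose k) * c ^ k * x powr (1 - 2 * real n - real k))"
  define A where "A = {(n, k). 2 * n + k \<le> N}"
  define B where "B = {..N} \<times> {..N}"
  have "A \<subseteq> B" "finite B" unfolding A_def B_def by auto
  then have split: "(\<Sum>p\<in>B. trm p x) = (\<Sum>p\<in>A. trm p x) + (\<Sum>p\<in>B - A. trm p x)" for x
    using sum.subset_diff by (metis add.commute)
  have "(\<Sum>m\<le>N. shift_coeff b c m * x powr (1 - real m)) = (\<Sum>p\<in>A. trm p x)" for x
  proof -
    have "shift_coeff b c m * x powr (1 - real m) = (\<Sum>n\<le>m div 2. trm (n, m - 2 * n) x)" for m
      unfolding shift_coeff_def sum_distrib_right trm_def by (intro sum.cong) (auto simp: of_nat_diff)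
    then show ?thesis
      using sum_atMost_div2_reindex[of "\<lambda>n k. trm (n, k) x" N] by (simp add: A_def)
  qed
  moreover have "(\<Sum>n\<le>N. \<Sum>k\<le>N. b n * ((1 - 2 * real n) gchoose k) * c ^ k * x powr (1 - 2 * real n - real k))
                   = (\<Sum>p\<in>B. trm p x)" for x
  proof -
    have "(\<Sum>p\<in>B. trm p x) = (\<Sum>n\<le>N. \<Sum>k\<le>N. trm (n, k) x)"
      unfolding B_def by (simp add: sum.cartesian_product)
    then show ?thesis by (simp add: trm_def)
  qed
  moreover have "(\<lambda>x. \<Sum>p\<in>B - A. trm p x) \<in> o[at_top](\<lambda>x. x powr (1 - real N))"
  proof (intro big_sum_in_smallo)
    fix p assume "p \<in> B - A"
    then obtain n k where p: "p = (n, k)" and "2 * n + k > N" unfolding A_def B_def by auto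
    then have "1 - 2 * real n - real k < 1 - real N" by linarith
    then show "trm p \<in> o[at_top](\<lambda>x. x powr (1 - real N))"
      unfolding p trm_def by (simp add: cmult_in_smallo powr_smallo_powr_at_top)
  qed
  ultimately show ?thesis by (simp add: split)
qed

lemma odd_powr_expansion_shift:
  fixes f :: "real \<Rightarrow> real" and b :: "nat \<Rightarrow> real" and c :: real
  assumes expansion: "(\<lambda>y. f y - (\<Sum>n\<le>N. b n * y powr (1 - 2 * real n)))
                        \<in> o[at_top](\<lambda>y. y powr (1 - 2 * real N))"
  shows "(\<lambda>x. f (x + c) - (\<Sum>m\<le>N. shift_coeff b c m * x powr (1 - real m)))
           \<in> o[at_top](\<lambda>x. x powr (1 - real N))"
proof -
  have "filterlim (\<lambda>x::real. x + c) at_top at_top" by real_asymp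
  from landau_o.small.compose[OF expansion this]
  have "(\<lambda>x. f (x + c) - (\<Sum>n\<le>N. b n * (x + c) powr (1 - 2 * real n)))
          \<in> o[at_top](\<lambda>x. (x + c) powr (1 - 2 * real N))" .
  also have "(\<lambda>x. (x + c) powr (1 - 2 * real N)) \<in> O[at_top](\<lambda>x. x powr (1 - 2 * real N))"
    by (rule powr_shift_bigo_at_top)
  also have "(\<lambda>x. x powr (1 - 2 * real N)) \<in> O[at_top](\<lambda>x. x powr (1 - real N))"
    by (rule powr_bigo_powr_at_top) simp
  finally have shifted: "(\<lambda>x. f (x + c) - (\<Sum>n\<le>N. b n * (x + c) powr (1 - 2 * real n)))
                           \<in> o[at_top](\<lambda>x. x powr (1 - real N))" .
  from sum_in_smallo(1)[OF sum_in_smallo(1)[OF shifted sum_powr_shift_expansion_at_top[where b = b and c = c]]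
                           double_sum_truncation_at_top[where b = b and c = c]]
  show ?thesis by simp
qed

lemma asym_coeff_eq_shift_coeff:
  "asym_coeff a s t m = shift_coeff (\<lambda>n. a n * ((t - s) / 2) ^ (2 * n)) ((s + t) / 2) m"
  unfolding asym_coeff_def shift_coeff_def sum_distrib_left
proof (intro sum.cong refl)
  fix n assume "n \<in> {..m div 2}"
  then have "(2::real) ^ m = 2 ^ (2 * n) * 2 ^ (m - 2 * n)"
    by (simp add: power_add[symmetric])
  then show "1 / 2 ^ m * (a n * ((1 - 2 * real n) gchoose (m - 2 * n)) * (t - s) ^ (2 * n) * (t + s) ^ (m - 2 * n))
      = a n * ((t - s) / 2) ^ (2 * n) * ((1 - 2 * real n) gchoose (m - 2 * n)) * ((s + t) / 2) ^ (m - 2 * n)"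
    by (simp add: power_divide add.commute)
qed

theorem proposition3p3:
  fixes M :: "real \<Rightarrow> real \<Rightarrow> real" and a :: "nat \<Rightarrow> real" and s t :: real
  assumes "is_mean M" and "symmetric_mean M" and "homogeneous_mean M"
    and "has_sym_asym_expansion M a"
    and "s \<noteq> t" and "s \<noteq> - t"
  shows "\<forall>N::nat. (\<lambda>x. M (x + s) (x + t) - (\<Sum>m\<le>N. asym_coeff a s t m * x powr (1 - real m)))
           \<in> o[at_top](\<lambda>x. x powr (1 - real N))"
proof
  fix N :: nat
  define c where "c = (s + t) / 2"
  define u where "u = (t - s) / 2"
  have "(\<lambda>y. M (y - u) (y + u) - (\<Sum>n\<le>N. a n * u ^ (2 * n) * y powr (1 - 2 * real n)))
          \<in> o[at_top](\<lambda>y. y powr (1 - 2 * real N))"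
    using assms(4) unfolding has_sym_asym_expansion_def by blast
  from odd_powr_expansion_shift[OF this, of c]
  have "(\<lambda>x. M (x + c - u) (x + c + u) - (\<Sum>m\<le>N. asym_coeff a s t m * x powr (1 - real m)))
          \<in> o[at_top](\<lambda>x. x powr (1 - real N))"
    unfolding asym_coeff_eq_shift_coeff c_def[symmetric] u_def[symmetric] .
  moreover have "x + c - u = x + s" "x + c + u = x + t" for x
    unfolding c_def u_def by (simp_all add: field_simps)
  ultimately show "(\<lambda>x. M (x + s) (x + t) - (\<Sum>m\<le>N. asym_coeff a s t m * x powr (1 - real m)))
          \<in> o[at_top](\<lambda>x. x powr (1 - real N))"
    by simp
qed

end
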